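(* For every integer $k\geq 3$ there exists a tree $T$ of order $n$ such that $\mathrm{rad}(T)>k$ and $\gamma_{B_k}(T)=\left\lceil\frac{k+2}{k+1}\cdot\frac{n}{3}\right\rceil$.
   Context: $d(u,v)$ denotes the distance in the graph; $\mathrm{rad}(T)$ is the radius. For a connected graph $G$ and an integer $k\ge 1$, a function $f\colon V(G)\to\{0,1,\dots,k\}$ is a dominating $k$-broadcast on $G$ if for every $u\in V(G)$ there is a vertex $v$ with $f(v)\geq 1$ and $d(u,v)\leq f(v)$. Its cost is $\omega(f)=\sum_{u\in V(G)}f(u)$, and the dominating $k$-broadcast number $\gamma_{B_k}(G)$ is the minimum cost of a dominating $k$-broadcast on $G$. *)

theory Defs
  imports Complex_Main
begin

definition simple_graph :: "'a set \<Rightarrow> ('a \<Rightarrow> 'a \<Rightarrow> bool) \<Rightarrow> bool" where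
  "simple_graph V E \<longleftrightarrow> finite V \<and> V \<noteq> {} \<and>
     (\<forall>u v. E u v \<longrightarrow> u \<in> V \<and> v \<in> V) \<and>
     (\<forall>u v. E u v \<longrightarrow> E v u) \<and> (\<forall>u. \<not> E u u)"

fun is_walk :: "('a \<Rightarrow> 'a \<Rightarrow> bool) \<Rightarrow> 'a list \<Rightarrow> bool" where
  "is_walk E [] = False"
| "is_walk E [x] = True"
| "is_walk E (x # y # xs) = (E x y \<and> is_walk E (y # xs))"

definition connected_graph :: "'a set \<Rightarrow> ('a \<Rightarrow> 'a \<Rightarrow> bool) \<Rightarrow> bool" where
  "connected_graph V E \<longleftrightarrow> (\<forall>u\<in>V. \<forall>v\<in>V. \<exists>p. is_walk E p \<and> hd p = u \<and> last p = v)"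

definition edge_set :: "'a set \<Rightarrow> ('a \<Rightarrow> 'a \<Rightarrow> bool) \<Rightarrow> 'a set set" where
  "edge_set V E = {{u, v} | u v. u \<in> V \<and> v \<in> V \<and> E u v}"

(* a tree: connected simple graph with |E| = |V| - 1 (equivalently connected and acyclic) *)
definition is_tree :: "'a set \<Rightarrow> ('a \<Rightarrow> 'a \<Rightarrow> bool) \<Rightarrow> bool" where
  "is_tree V E \<longleftrightarrow> simple_graph V E \<and> connected_graph V E \<and> card (edge_set V E) = card V - 1"

definition dist :: "('a \<Rightarrow> 'a \<Rightarrow> bool) \<Rightarrow> 'a \<Rightarrow> 'a \<Rightarrow> nat" where
  "dist E u v = (LEAST m. \<exists>p. is_walk E p \<and> hd p = u \<and> last p = v \<and> length p = Suc m)"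

definition eccentricity :: "'a set \<Rightarrow> ('a \<Rightarrow> 'a \<Rightarrow> bool) \<Rightarrow> 'a \<Rightarrow> nat" where
  "eccentricity V E v = Max (dist E v ` V)"

definition radius :: "'a set \<Rightarrow> ('a \<Rightarrow> 'a \<Rightarrow> bool) \<Rightarrow> nat" where
  "radius V E = Min (eccentricity V E ` V)"

definition dominating_k_broadcast ::
  "'a set \<Rightarrow> ('a \<Rightarrow> 'a \<Rightarrow> bool) \<Rightarrow> nat \<Rightarrow> ('a \<Rightarrow> nat) \<Rightarrow> bool" where
  "dominating_k_broadcast V E k f \<longleftrightarrow>
     (\<forall>v\<in>V. f v \<le> k) \<and>
     (\<forall>u\<in>V. \<exists>v\<in>V. f v \<ge> 1 \<and> dist E u v \<le> f v)"

definition broadcast_cost :: "'a set \<Rightarrow> ('a \<Rightarrow> nat) \<Rightarrow> nat" where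
  "broadcast_cost V f = (\<Sum>u\<in>V. f u)"

definition broadcast_number :: "'a set \<Rightarrow> ('a \<Rightarrow> 'a \<Rightarrow> bool) \<Rightarrow> nat \<Rightarrow> nat" where
  "broadcast_number V E k =
     (LEAST c. \<exists>f. dominating_k_broadcast V E k f \<and> broadcast_cost V f = c)"

end

theory Submission
  imports Defs
begin

text \<open>Take the path on 2k+3 vertices and hang a leaf on each of its k interior vertices at even
  position. This tree has n = 3k+3 vertices and radius k+1, and broadcasting with strength k from
  the centre and strength 1 from both ends dominates it at cost k+2. Conversely the two ends and
  the k leaves are spread out so evenly that a ball of radius r \<le> k contains at most r of these
  k+2 vertices; charging each of them to a broadcaster that hears it shows that every dominating
  k-broadcast costs at least k+2 = (k+2)/(k+1) \<cdot> n/3.\<close>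

lemma is_walk_Cons: "is_walk E p \<Longrightarrow> p \<noteq> [] \<Longrightarrow> E u (hd p) \<Longrightarrow> is_walk E (u # p)"
  by (cases p) auto

lemma walk_length_ge_potential:
  fixes D :: "'a \<Rightarrow> nat"
  assumes lip: "\<And>x y. E x y \<Longrightarrow> D x \<le> D y + 1"
  shows "is_walk E p \<Longrightarrow> D (hd p) \<le> D (last p) + (length p - 1)"
proof (induction p)
  case Nil
  then show ?case by simp
next
  case (Cons x xs)
  show ?case
  proof (cases xs)
    case Nil
    then show ?thesis by simp
  next
    case (Cons y ys)
    with Cons.prems have "E x y" "is_walk E xs" by auto
    with Cons.IH lip[of x y] \<open>xs = y # ys\<close> show ?thesis by auto
  qed
qed

lemma walk_along_potential:
  fixes D :: "'a \<Rightarrow> nat"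
  assumes descent: "\<And>u. u \<in> V \<Longrightarrow> u \<noteq> v \<Longrightarrow> \<exists>w. E u w \<and> D w + 1 = D u"
    and closed: "\<And>x y. E x y \<Longrightarrow> y \<in> V"
    and "D v = 0"
  shows "u \<in> V \<Longrightarrow> \<exists>p. is_walk E p \<and> hd p = u \<and> last p = v \<and> length p = Suc (D u)"
proof (induction "D u" arbitrary: u)
  case 0
  then have "u = v" using descent by fastforce
  then show ?case using 0 by (intro exI[of _ "[v]"]) auto
next
  case (Suc m)
  then have "u \<noteq> v" using \<open>D v = 0\<close> by auto
  then obtain w where w: "E u w" "D w + 1 = D u" using descent Suc.prems by blast
  then obtain p where p: "is_walk E p" "hd p = w" "last p = v" "length p = Suc m"
    using Suc closed by force
  then show ?case using w Suc.hyps is_walk_Cons[of E p u]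
    by (intro exI[of _ "u # p"]) auto
qed

lemma dist_eq_potential:
  fixes D :: "'a \<Rightarrow> nat"
  assumes descent: "\<And>u. u \<in> V \<Longrightarrow> u \<noteq> v \<Longrightarrow> \<exists>w. E u w \<and> D w + 1 = D u"
    and closed: "\<And>x y. E x y \<Longrightarrow> y \<in> V"
    and lip: "\<And>x y. E x y \<Longrightarrow> D x \<le> D y + 1"
    and "D v = 0" and "u \<in> V"
  shows "dist E u v = D u"
  unfolding dist_def
proof (rule Least_equality)
  show "\<exists>p. is_walk E p \<and> hd p = u \<and> last p = v \<and> length p = Suc (D u)"
    using walk_along_potential[OF descent closed \<open>D v = 0\<close> \<open>u \<in> V\<close>] .
next
  fix m assume "\<exists>p. is_walk E p \<and> hd p = u \<and> last p = v \<and> length p = Suc m"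
  then show "D u \<le> m"
    using walk_length_ge_potential[of E D, OF lip] \<open>D v = 0\<close> by fastforce
qed

definition parent_adj :: "nat \<Rightarrow> (nat \<Rightarrow> nat) \<Rightarrow> nat \<Rightarrow> nat \<Rightarrow> bool" where
  "parent_adj N p x y \<longleftrightarrow> (x \<in> {1..N} \<and> y = p x) \<or> (y \<in> {1..N} \<and> x = p y)"

lemma simple_graph_parent_adj:
  assumes "\<And>x. x \<in> {1..N} \<Longrightarrow> p x < x"
  shows "simple_graph {..N} (parent_adj N p)"
  unfolding simple_graph_def parent_adj_def using assms by fastforce

lemma edge_set_parent_adj:
  assumes "\<And>x. x \<in> {1..N} \<Longrightarrow> p x < x"
  shows "edge_set {..N} (parent_adj N p) = (\<lambda>x. {x, p x}) ` {1..N}"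
  using assms unfolding edge_set_def parent_adj_def by fastforce

lemma card_edge_set_parent_adj:
  assumes parent_less: "\<And>x. x \<in> {1..N} \<Longrightarrow> p x < x"
  shows "card (edge_set {..N} (parent_adj N p)) = N"
proof -
  have "inj_on (\<lambda>x. {x, p x}) {1..N}"
  proof (rule inj_onI)
    fix x y assume "x \<in> {1..N}" "y \<in> {1..N}" "{x, p x} = {y, p y}"
    then show "x = y" using parent_less[of x] parent_less[of y] by (auto simp: doubleton_eq_iff)
  qed
  then show ?thesis using card_image edge_set_parent_adj[OF parent_less] by fastforce
qed

text \<open>The tree is a caterpillar: vertices 0, ..., 2k+2 form the spine; vertex 2k+2+j
  (1 \<le> j \<le> k) is a leaf hanging from spine vertex 2j.\<close>

definition cat_parent :: "nat \<Rightarrow> nat \<Rightarrow> nat" where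
  "cat_parent k x = (if x \<le> 2*k+2 then x - 1 else 2*(x - (2*k+2)))"

abbreviation cat_adj :: "nat \<Rightarrow> nat \<Rightarrow> nat \<Rightarrow> bool" where
  "cat_adj k \<equiv> parent_adj (3*k+2) (cat_parent k)"

definition cat_pos :: "nat \<Rightarrow> nat \<Rightarrow> nat" where
  "cat_pos k x = (if x \<le> 2*k+2 then x else 2*(x - (2*k+2)))"

definition cat_depth :: "nat \<Rightarrow> nat \<Rightarrow> nat" where
  "cat_depth k x = (if x \<le> 2*k+2 then 0 else 1)"

definition cat_dist :: "nat \<Rightarrow> nat \<Rightarrow> nat \<Rightarrow> nat" where
  "cat_dist k u v = (if u = v then 0
     else (cat_pos k u - cat_pos k v) + (cat_pos k v - cat_pos k u) + cat_depth k u + cat_depth k v)"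

lemma cat_parent_less: "x \<in> {1..3*k+2} \<Longrightarrow> cat_parent k x < x"
  by (auto simp: cat_parent_def)

lemma cat_dist_adj: "cat_adj k x y \<Longrightarrow> cat_dist k x y = 1"
  by (auto simp: parent_adj_def cat_parent_def cat_dist_def cat_pos_def cat_depth_def
      split: if_splits)

lemma cat_dist_triangle: "cat_dist k u w \<le> cat_dist k u v + cat_dist k v w"
  by (auto simp: cat_dist_def)

lemma cat_dist_sym: "cat_dist k u v = cat_dist k v u"
  by (auto simp: cat_dist_def)

lemma cat_dist_descent:
  assumes u: "u \<in> {..3*k+2}" and v: "v \<in> {..3*k+2}" and "u \<noteq> v"
  shows "\<exists>w. cat_adj k u w \<and> cat_dist k w v + 1 = cat_dist k u v"
proof -
  consider "2*k+2 < u" | "u \<le> 2*k+2" "cat_pos k v = u"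
    | "u \<le> 2*k+2" "u < cat_pos k v" | "u \<le> 2*k+2" "cat_pos k v < u"
    by linarith
  then show ?thesis
  proof cases
    case 1
    then show ?thesis using u v \<open>u \<noteq> v\<close>
      by (intro exI[of _ "cat_parent k u"])
        (auto simp: parent_adj_def cat_parent_def cat_dist_def cat_pos_def cat_depth_def)
  next
    case 2
    then show ?thesis using u v \<open>u \<noteq> v\<close>
      by (intro exI[of _ v])
        (auto simp: parent_adj_def cat_parent_def cat_dist_def cat_pos_def cat_depth_def
          split: if_splits)
  next
    case 3
    then show ?thesis using u v \<open>u \<noteq> v\<close>
      by (intro exI[of _ "Suc u"])
        (auto simp: parent_adj_def cat_parent_def cat_dist_def cat_pos_def cat_depth_def
          split: if_splits)
  next
    case 4
    then show ?thesis using u v \<open>u \<noteq> v\<close>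
      by (intro exI[of _ "u - 1"])
        (auto simp: parent_adj_def cat_parent_def cat_dist_def cat_pos_def cat_depth_def
          split: if_splits)
  qed
qed

lemma dist_cat_adj:
  assumes "u \<in> {..3*k+2}" "v \<in> {..3*k+2}"
  shows "dist (cat_adj k) u v = cat_dist k u v"
proof (rule dist_eq_potential[where V = "{..3*k+2}"])
  show "\<exists>w. cat_adj k x w \<and> cat_dist k w v + 1 = cat_dist k x v"
    if "x \<in> {..3*k+2}" "x \<noteq> v" for x
    using cat_dist_descent[OF that(1) assms(2) that(2)] .
  show "cat_dist k x v \<le> cat_dist k y v + 1" if "cat_adj k x y" for x y
    using cat_dist_triangle[of k x v y] cat_dist_adj[OF that] by simp
qed (use assms in \<open>auto simp: parent_adj_def cat_dist_def cat_parent_def\<close>)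

lemma connected_cat_adj: "connected_graph {..3*k+2} (cat_adj k)"
  unfolding connected_graph_def
proof (intro ballI)
  fix u v assume "u \<in> {..3*k+2}" "v \<in> {..3*k+2}"
  then have "\<exists>p. is_walk (cat_adj k) p \<and> hd p = u \<and> last p = v \<and> length p = Suc (cat_dist k u v)"
    by (intro walk_along_potential[where V = "{..3*k+2}"] cat_dist_descent)
      (auto simp: parent_adj_def cat_dist_def cat_parent_def)
  then show "\<exists>p. is_walk (cat_adj k) p \<and> hd p = u \<and> last p = v" by blast
qed

lemma is_tree_cat_adj: "is_tree {..3*k+2} (cat_adj k)"
  unfolding is_tree_def
  using simple_graph_parent_adj[OF cat_parent_less] connected_cat_adj
    card_edge_set_parent_adj[OF cat_parent_less] by simp

lemma radius_cat_adj: "k < radius {..3*k+2} (cat_adj k)"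
proof -
  have "k < eccentricity {..3*k+2} (cat_adj k) v" if v: "v \<in> {..3*k+2}" for v
  proof -
    define w where "w = (if cat_pos k v \<le> k+1 then 2*k+2 else 0)"
    have w: "w \<in> {..3*k+2}" by (simp add: w_def)
    have "k < cat_dist k v w"
      using v by (auto simp: w_def cat_dist_def cat_pos_def cat_depth_def)
    also have "\<dots> = dist (cat_adj k) v w" using dist_cat_adj[OF v w] by simp
    also have "\<dots> \<le> eccentricity {..3*k+2} (cat_adj k) v"
      unfolding eccentricity_def using w by (intro Max_ge) auto
    finally show ?thesis .
  qed
  then show ?thesis unfolding radius_def by (subst Min_gr_iff) auto
qed

lemma broadcast_cost_ge_card:
  assumes "finite V" "S \<subseteq> V" and dom: "dominating_k_broadcast V E k f"
    and sparse: "\<And>v r. v \<in> V \<Longrightarrow> 1 \<le> r \<Longrightarrow> r \<le> k \<Longrightarrow> card {s \<in> S. dist E s v \<le> r} \<le> r"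
  shows "card S \<le> broadcast_cost V f"
proof -
  have "\<forall>s\<in>S. \<exists>v. v \<in> V \<and> 1 \<le> f v \<and> dist E s v \<le> f v"
    using dom \<open>S \<subseteq> V\<close> unfolding dominating_k_broadcast_def by blast
  then obtain g where g: "\<And>s. s \<in> S \<Longrightarrow> g s \<in> V \<and> 1 \<le> f (g s) \<and> dist E s (g s) \<le> f (g s)"
    by metis
  have "card S = (\<Sum>v\<in>V. card {s \<in> S. g s = v})"
    using sum.group[where S = S and T = V and g = g and h = "\<lambda>_. 1 :: nat"] g
      finite_subset[OF \<open>S \<subseteq> V\<close> \<open>finite V\<close>] \<open>finite V\<close>
    by (simp add: image_subset_iff)
  also have "\<dots> \<le> (\<Sum>v\<in>V. f v)"
  proof (rule sum_mono)
    fix v assume v: "v \<in> V"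
    show "card {s \<in> S. g s = v} \<le> f v"
    proof (cases "\<exists>s \<in> S. g s = v")
      case True
      then have "1 \<le> f v" using g by blast
      moreover have "f v \<le> k" using dom v by (simp add: dominating_k_broadcast_def)
      moreover have "{s \<in> S. g s = v} \<subseteq> {s \<in> S. dist E s v \<le> f v}" using g by auto
      ultimately show ?thesis
        using sparse[OF v] card_mono[OF _ \<open>{s \<in> S. g s = v} \<subseteq> _\<close>]
          finite_subset[OF \<open>S \<subseteq> V\<close> \<open>finite V\<close>] by fastforce
    next
      case False
      then have "{s \<in> S. g s = v} = {}" by blast
      then show ?thesis by (metis card.empty zero_le)
    qed
  qed
  finally show ?thesis by (simp add: broadcast_cost_def)
qed

text \<open>The tips, in spine order: the end 0, the leaves 2k+3, ..., 3k+2, and the end 2k+2.\<close>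

definition cat_tip :: "nat \<Rightarrow> nat \<Rightarrow> nat" where
  "cat_tip k j = (if j = 0 then 0 else if j = k+1 then 2*k+2 else 2*k+2+j)"

lemma cat_tip_in: "j \<le> k+1 \<Longrightarrow> cat_tip k j \<in> {..3*k+2}"
  by (auto simp: cat_tip_def)

lemma inj_on_cat_tip: "inj_on (cat_tip k) {..k+1}"
  by (auto simp: inj_on_def cat_tip_def)

lemma cat_dist_tips:
  "j < j' \<Longrightarrow> j' \<le> k+1 \<Longrightarrow> min (2*k+2) (2*(j'-j)+1) \<le> cat_dist k (cat_tip k j) (cat_tip k j')"
  by (auto simp: cat_tip_def cat_dist_def cat_pos_def cat_depth_def)

lemma card_cat_tips_in_ball:
  assumes "1 \<le> r" "r \<le> k"
  shows "card {j \<in> {..k+1}. cat_dist k (cat_tip k j) v \<le> r} \<le> r"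
proof (cases "{j \<in> {..k+1}. cat_dist k (cat_tip k j) v \<le> r} = {}")
  case False
  define J where "J = {j \<in> {..k+1}. cat_dist k (cat_tip k j) v \<le> r}"
  define a where "a = Min J"
  have "finite J" by (simp add: J_def)
  with False have "a \<in> J" unfolding a_def J_def by (intro Min_in) auto
  have "J \<subseteq> {a..<a+r}"
  proof
    fix j assume "j \<in> J"
    have "a \<le> j" using \<open>finite J\<close> \<open>j \<in> J\<close> unfolding a_def by simp
    moreover have "j < a + r" if "a < j"
    proof -
      have "cat_dist k (cat_tip k a) (cat_tip k j)
          \<le> cat_dist k (cat_tip k a) v + cat_dist k (cat_tip k j) v"
        using cat_dist_triangle[of k "cat_tip k a" "cat_tip k j" v] cat_dist_sym[of k v] by simp
      also have "\<dots> \<le> 2*r" using \<open>a \<in> J\<close> \<open>j \<in> J\<close> by (simp add: J_def)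
      finally have "cat_dist k (cat_tip k a) (cat_tip k j) \<le> 2*r" .
      moreover have "j \<le> k+1" using \<open>j \<in> J\<close> by (simp add: J_def)
      ultimately show ?thesis
        using cat_dist_tips[OF that, of k] \<open>r \<le> k\<close> by (simp add: min_def split: if_splits)
    qed
    ultimately show "j \<in> {a..<a+r}" using \<open>1 \<le> r\<close> by (cases "a = j") auto
  qed
  then have "card J \<le> r" using card_mono[of "{a..<a+r}" J] by simp
  then show ?thesis by (simp add: J_def)
qed (simp only: card.empty zero_le)

lemma cat_broadcast_cost_ge:
  assumes "dominating_k_broadcast {..3*k+2} (cat_adj k) k f"
  shows "k + 2 \<le> broadcast_cost {..3*k+2} f"
proof -
  let ?S = "cat_tip k ` {..k+1}"
  have "card ?S = k + 2" using card_image[OF inj_on_cat_tip] by simp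
  moreover have "card ?S \<le> broadcast_cost {..3*k+2} f"
  proof (rule broadcast_cost_ge_card[OF _ _ assms])
    show "?S \<subseteq> {..3*k+2}" using cat_tip_in by blast
    fix v r assume "v \<in> {..3*k+2}" "1 \<le> r" "r \<le> k"
    have "card {s \<in> ?S. dist (cat_adj k) s v \<le> r}
        = card (cat_tip k ` {j \<in> {..k+1}. cat_dist k (cat_tip k j) v \<le> r})"
      using dist_cat_adj[OF cat_tip_in \<open>v \<in> _\<close>] by (auto intro!: arg_cong[where f = card])
    also have "\<dots> \<le> card {j \<in> {..k+1}. cat_dist k (cat_tip k j) v \<le> r}"
      by (rule card_image_le) simp
    also have "\<dots> \<le> r" using card_cat_tips_in_ball[OF \<open>1 \<le> r\<close> \<open>r \<le> k\<close>] .
    finally show "card {s \<in> ?S. dist (cat_adj k) s v \<le> r} \<le> r" .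
  qed simp
  ultimately show ?thesis by simp
qed

definition cat_broadcast :: "nat \<Rightarrow> nat \<Rightarrow> nat" where
  "cat_broadcast k x = (if x = k+1 then k else if x = 0 \<or> x = 2*k+2 then 1 else 0)"

lemma dominating_cat_broadcast:
  assumes "1 \<le> k"
  shows "dominating_k_broadcast {..3*k+2} (cat_adj k) k (cat_broadcast k)"
  unfolding dominating_k_broadcast_def
proof (intro conjI ballI)
  fix v assume "v \<in> {..3*k+2}"
  then show "cat_broadcast k v \<le> k" using assms by (simp add: cat_broadcast_def)
next
  fix u assume u: "u \<in> {..3*k+2}"
  show "\<exists>v\<in>{..3*k+2}. 1 \<le> cat_broadcast k v \<and> dist (cat_adj k) u v \<le> cat_broadcast k v"
  proof (cases "u = 0 \<or> u = 2*k+2")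
    case True
    then show ?thesis using u dist_cat_adj[OF u u]
      by (intro bexI[of _ u]) (auto simp: cat_broadcast_def cat_dist_def)
  next
    case False
    have "cat_dist k u (k+1) \<le> k"
      using False u by (auto simp: cat_dist_def cat_pos_def cat_depth_def)
    then show ?thesis using dist_cat_adj[OF u, of "k+1"] assms
      by (intro bexI[of _ "k+1"]) (auto simp: cat_broadcast_def)
  qed
qed

lemma broadcast_cost_cat_broadcast: "broadcast_cost {..3*k+2} (cat_broadcast k) = k + 2"
proof -
  have "cat_broadcast k = (\<lambda>x. (if x = k+1 then k else 0) + (if x = 0 then 1 else 0)
      + (if x = 2*k+2 then 1 else 0))"
    by (auto simp: cat_broadcast_def)
  then show ?thesis by (simp add: broadcast_cost_def sum.distrib)
qed

lemma broadcast_number_cat_adj: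
  "1 \<le> k \<Longrightarrow> broadcast_number {..3*k+2} (cat_adj k) k = k + 2"
  unfolding broadcast_number_def
  using dominating_cat_broadcast broadcast_cost_cat_broadcast cat_broadcast_cost_ge
  by (intro Least_equality) blast+

theorem proposition3:
  fixes k :: nat
  assumes "k \<ge> 3"
  shows "\<exists>(V :: nat set) E n. is_tree V E \<and> card V = n \<and> radius V E > k \<and>
           int (broadcast_number V E k) =
             \<lceil>(real (k + 2) / real (k + 1)) * (real n / 3)\<rceil>"
proof (intro exI conjI)
  show "is_tree {..3*k+2} (cat_adj k)" by (rule is_tree_cat_adj)
  show "card {..3*k+2} = 3*k+3" by simp
  show "k < radius {..3*k+2} (cat_adj k)" by (rule radius_cat_adj)
  have n_scaled: "(real (k + 2) / real (k + 1)) * (real (3*k+3) / 3) = real (k + 2)"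
    by (simp add: field_simps)
  show "int (broadcast_number {..3*k+2} (cat_adj k) k) =
      \<lceil>(real (k + 2) / real (k + 1)) * (real (3*k+3) / 3)\<rceil>"
    unfolding n_scaled ceiling_of_nat using broadcast_number_cat_adj[of k] assms by simp
qed

end
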